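(* Let $X\in\mathbb{R}^{m\times n}$ with $m\geq n$, and let $X=U\Sigma V^\top$ be a singular value decomposition, where $U\in\mathbb{R}^{m\times m}$ and $V\in\mathbb{R}^{n\times n}$ satisfy $U^\top U=I$, $V^\top V=I$, and $\Sigma\in\mathbb{R}^{m\times n}$ is diagonal with diagonal entries $\sigma_i=\Sigma_{ii}$, $i=1,\dots,n$, which are nonzero and pairwise distinct in absolute value. Let $dX\in\mathbb{R}^{m\times n}$ be a variation of $X$ and $(dU,d\Sigma,dV)$ the induced variation of the SVD factors. Then $$d\Sigma=(U^\top dX\,V)_{diag},\qquad dV=2V\left(K^\top\circ(\Sigma^\top U^\top dX\, V)_{sym}\right),$$ where $K\in\mathbb{R}^{n\times n}$ is given by $K_{ij}=\frac{1}{\sigma_i^2-\sigma_j^2}$ for $i\neq j$ and $K_{ii}=0$. Moreover, writing $\Sigma_n\in\mathbb{R}^{n\times n}$ for the top $n$ rows of $\Sigma$, $U=(U_1\,|\,U_2)$ with $U_1\in\mathbb{R}^{m\times n}$, $U_2\in\mathbb{R}^{m\times(m-n)}$, and $dU=(dU_1\,|\,dU_2)$ with the same block sizes, $$dU=\bigl(C\Sigma_n^{-1}\,\big|\,-U_1\Sigma_n^{-1}C^\top U_2\bigr),\qquad C=dX\,V-U\,d\Sigma-U\Sigma\, dV^\top V.$$ Consequently, for a scalar function $L$ of $(U,\Sigma,V)$ with partial derivatives $\frac{\partial L}{\partial U},\frac{\partial L}{\partial \Sigma},\frac{\partial L}{\partial V}$, writing $\frac{\partial L}{\partial U}=\left(\left(\frac{\partial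 L}{\partial U}\right)_1\,\middle|\,\left(\frac{\partial L}{\partial U}\right)_2\right)$ with blocks of sizes $m\times n$ and $m\times(m-n)$, the partial derivative of $L\circ f$ (where $f(X)=(U,\Sigma,V)$) with respect to $X$ is $$\frac{\partial L\circ f}{\partial X}=DV^\top+U\left(\frac{\partial L}{\partial \Sigma}-U^\top D\right)_{diag}V^\top+2U\Sigma\left(K^\top\circ\left(V^\top\left(\frac{\partial L}{\partial V}-VD^\top U\Sigma\right)\right)\right)_{sym}V^\top,$$ where $D=\left(\frac{\partial L}{\partial U}\right)_1\Sigma_n^{-1}-U_2\left(\frac{\partial L}{\partial U}\right)_2^\top U_1\Sigma_n^{-1}$.
   Context: Notation: for a square matrix $A$, $A_{sym}=\frac12(A^\top+A)$; for any matrix $A$, $A_{diag}$ is the matrix of the same size equal to $A$ on the main diagonal and $0$ elsewhere; $\circ$ is the Hadamard (entrywise) product; $A:B=\operatorname{Tr}(A^\top B)=\sum_{ij}A_{ij}B_{ij}$. Variations are first-order perturbations: given $dX$, the induced variation of the SVD factors is a triple $(dU,d\Sigma,dV)$ with $d\Sigma$ diagonal (of the same shape as $\Sigma$), $U^\top dU+dU^\top U=0$, $V^\top dV+dV^\top V=0$, and $dX=dU\,\Sigma V^\top+U\,d\Sigma\, V^\top+U\Sigma\, dV^\top$; when $m>n$, the component $U_2^\top dU_2$ (not determined by these conditions) is taken to be $0$. The partial derivative of a scalar function $L$ with respect to a matrix argument $Y$ is the matrix $\frac{\partial L}{\partial Y}$ such that the first-order change of $L$ is $\frac{\partial L}{\partial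 Y}:dY$. The claimed formula for $\frac{\partial L\circ f}{\partial X}$ means: for every $dX$ with induced $(dU,d\Sigma,dV)$, $\frac{\partial L}{\partial U}:dU+\frac{\partial L}{\partial \Sigma}:d\Sigma+\frac{\partial L}{\partial V}:dV=\frac{\partial L\circ f}{\partial X}:dX$. *)

theory Defs
  imports "Jordan_Normal_Form.Matrix"
begin

definition sym_mat :: "real mat \<Rightarrow> real mat" where
  "sym_mat A = (1/2) \<cdot>\<^sub>m (A\<^sup>T + A)"

definition diag_part :: "real mat \<Rightarrow> real mat" where
  "diag_part A = mat (dim_row A) (dim_col A) (\<lambda>(i,j). if i = j then A $$ (i,j) else 0)"

definition hadamard :: "real mat \<Rightarrow> real mat \<Rightarrow> real mat" (infixl \<open>\<circ>\<^sub>h\<close> 70) where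
  "hadamard A B = mat (dim_row A) (dim_col A) (\<lambda>ij. A $$ ij * B $$ ij)"

definition frob :: "real mat \<Rightarrow> real mat \<Rightarrow> real" (infix \<open>:\<^sub>F\<close> 65) where
  "frob A B = (\<Sum>i<dim_row A. \<Sum>j<dim_col A. A $$ (i,j) * B $$ (i,j))"

definition mat_inv :: "real mat \<Rightarrow> real mat" where
  "mat_inv A = (SOME B. B \<in> carrier_mat (dim_row A) (dim_row A) \<and> inverts_mat A B \<and> inverts_mat B A)"

definition col_block :: "real mat \<Rightarrow> nat \<Rightarrow> nat \<Rightarrow> real mat" where
  "col_block A a b = mat (dim_row A) (b - a) (\<lambda>(i,j). A $$ (i, j + a))"

definition row_block :: "real mat \<Rightarrow> nat \<Rightarrow> nat \<Rightarrow> real mat" where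
  "row_block A a b = mat (b - a) (dim_col A) (\<lambda>(i,j). A $$ (i + a, j))"

definition hcat :: "real mat \<Rightarrow> real mat \<Rightarrow> real mat" where
  "hcat A B = mat (dim_row A) (dim_col A + dim_col B)
     (\<lambda>(i,j). if j < dim_col A then A $$ (i,j) else B $$ (i, j - dim_col A))"

definition K_mat :: "nat \<Rightarrow> real mat \<Rightarrow> real mat" where
  "K_mat n S = mat n n (\<lambda>(i,j). if i = j then 0 else 1 / ((S $$ (i,i))^2 - (S $$ (j,j))^2))"

definition induced_variation ::
  "nat \<Rightarrow> nat \<Rightarrow> real mat \<Rightarrow> real mat \<Rightarrow> real mat \<Rightarrow> real mat \<Rightarrow> real mat \<Rightarrow> real mat \<Rightarrow> real mat \<Rightarrow> bool" where
  "induced_variation m n U S V dX dU dS dV \<longleftrightarrow>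
     dU \<in> carrier_mat m m \<and> dS \<in> carrier_mat m n \<and> dV \<in> carrier_mat n n \<and>
     diagonal_mat dS \<and>
     U\<^sup>T * dU + dU\<^sup>T * U = 0\<^sub>m m m \<and>
     V\<^sup>T * dV + dV\<^sup>T * V = 0\<^sub>m n n \<and>
     dX = dU * S * V\<^sup>T + U * dS * V\<^sup>T + U * S * dV\<^sup>T \<and>
     (col_block U n m)\<^sup>T * col_block dU n m = 0\<^sub>m (m - n) (m - n)"

end

(* Write Omega_U = U^T dU and Omega_V = V^T dV.  Orthogonality of U and V makes both
   skew-symmetric, and the variation identity becomes U^T dX V = Omega_U S + dS - S Omega_V.
   Skew matrices vanish on the diagonal, so the diagonal of U^T dX V is dS.  Symmetrising
   S^T (U^T dX V) eliminates Omega_U and leaves (s_j^2 - s_i^2) (Omega_V)_ij off the diagonal,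
   which gives dV.  Since dX V - U dS - U S dV^T V = dU S, the first n columns of dU are
   C S_n^-1; the last m - n columns equal -U_1 dU_1^T U_2, because U_2^T dU_2 = 0 and Omega_U
   is skew.  The gradient formula is the adjoint of the linear map dX |-> (dU, dS, dV) for the
   Frobenius product; it only uses that S_n^-1 is symmetric and follows by moving every factor
   across ":". *)

theory Submission
  imports Defs "Jordan_Normal_Form.Determinant"
begin

lemma index_mult_mat_sum:
  assumes "A \<in> carrier_mat a b" "B \<in> carrier_mat b c" "i < a" "j < c"
  shows "(A * B) $$ (i,j) = (\<Sum>k<b. A $$ (i,k) * B $$ (k,j))"
  using assms by (auto simp: scalar_prod_def atLeast0LessThan)

lemma index_mult_diagonal_right:
  assumes "S \<in> carrier_mat q n" "diagonal_mat S" "A \<in> carrier_mat p q" "i < p" "j < n" "j < q"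
  shows "(A * S) $$ (i,j) = A $$ (i,j) * S $$ (j,j)"
proof -
  have "(A * S) $$ (i,j) = (\<Sum>k<q. A $$ (i,k) * S $$ (k,j))"
    using assms by (intro index_mult_mat_sum) auto
  also have "\<dots> = (\<Sum>k<q. if k = j then A $$ (i,j) * S $$ (j,j) else 0)"
    using assms by (intro sum.cong) (auto simp: diagonal_mat_def)
  finally show ?thesis using assms by simp
qed

lemma index_mult_diagonal_left:
  assumes "S \<in> carrier_mat a b" "diagonal_mat S" "B \<in> carrier_mat b p" "i < a" "j < p"
  shows "(S * B) $$ (i,j) = (if i < b then S $$ (i,i) * B $$ (i,j) else 0)"
proof -
  have "(S * B) $$ (i,j) = (\<Sum>k<b. S $$ (i,k) * B $$ (k,j))"
    using assms by (intro index_mult_mat_sum) auto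
  also have "\<dots> = (\<Sum>k<b. if k = i then S $$ (i,i) * B $$ (i,j) else 0)"
    using assms by (intro sum.cong) (auto simp: diagonal_mat_def)
  finally show ?thesis using assms by simp
qed

lemma orthogonal_mult_transpose:
  fixes Q :: "real mat"
  assumes "Q \<in> carrier_mat n n" "Q\<^sup>T * Q = 1\<^sub>m n"
  shows "Q * Q\<^sup>T = 1\<^sub>m n"
  using mat_mult_left_right_inverse[of "Q\<^sup>T" n Q] assms by auto

lemma skew_mat_entry:
  fixes W :: "real mat"
  assumes "W \<in> carrier_mat n n" "W + W\<^sup>T = 0\<^sub>m n n" "i < n" "j < n"
  shows "W $$ (j,i) = - W $$ (i,j)"
proof -
  have "W $$ (i,j) + W $$ (j,i) = (W + W\<^sup>T) $$ (i,j)" using assms(1,3,4) by simp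
  also have "\<dots> = 0" using assms by simp
  finally show ?thesis by linarith
qed

lemma mat_inv_eqI:
  assumes A: "A \<in> carrier_mat n n" and B: "B \<in> carrier_mat n n"
    and "A * B = 1\<^sub>m n" "B * A = 1\<^sub>m n"
  shows "mat_inv A = B"
proof -
  let ?inv = "\<lambda>B. B \<in> carrier_mat (dim_row A) (dim_row A) \<and> inverts_mat A B \<and> inverts_mat B A"
  have "?inv B" using assms unfolding inverts_mat_def by auto
  hence "?inv (mat_inv A)" unfolding mat_inv_def by (rule someI)
  hence B': "mat_inv A \<in> carrier_mat n n" and B'A: "mat_inv A * A = 1\<^sub>m n"
    using A unfolding inverts_mat_def by auto
  have "mat_inv A = mat_inv A * (A * B)" using assms B' by simp
  also have "\<dots> = (mat_inv A * A) * B" using A B B' by (simp add: assoc_mult_mat[of _ n n A n B n])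
  finally show ?thesis using B'A B by simp
qed

lemma mat_inv_diagonal:
  assumes A: "A \<in> carrier_mat n n" and "diagonal_mat A" and nz: "\<forall>i<n. A $$ (i,i) \<noteq> 0"
  shows "mat_inv A = mat n n (\<lambda>(i,j). if i = j then 1 / A $$ (i,i) else 0)"
    (is "_ = ?B")
proof (rule mat_inv_eqI[OF A])
  have B: "?B \<in> carrier_mat n n" and dB: "diagonal_mat ?B"
    by (auto simp: diagonal_mat_def)
  show "A * ?B = 1\<^sub>m n"
    by (rule eq_matI)
      (use assms B in \<open>auto simp: index_mult_diagonal_left[OF A _ B] carrier_matD
        simp del: index_mult_mat(1)\<close>)
  show "?B * A = 1\<^sub>m n"
    by (rule eq_matI)
      (use assms B in \<open>auto simp: index_mult_diagonal_left[OF B dB A] carrier_matD diagonal_mat_def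
        simp del: index_mult_mat(1)\<close>)
qed auto

lemma diag_part_carrier [simp]: "A \<in> carrier_mat p q \<Longrightarrow> diag_part A \<in> carrier_mat p q"
  unfolding diag_part_def by auto

lemma hadamard_carrier [simp]: "A \<in> carrier_mat p q \<Longrightarrow> A \<circ>\<^sub>h B \<in> carrier_mat p q"
  unfolding hadamard_def by auto

lemma sym_mat_carrier [simp]: "A \<in> carrier_mat p p \<Longrightarrow> sym_mat A \<in> carrier_mat p p"
  unfolding sym_mat_def by auto

lemma col_block_one_mult:
  assumes A: "A \<in> carrier_mat p q" and "a \<le> b" "b \<le> q"
  shows "A * col_block (1\<^sub>m q) a b = col_block A a b"
proof (rule eq_matI)
  have E: "col_block (1\<^sub>m q) a b \<in> carrier_mat q (b - a)" unfolding col_block_def by auto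
  fix i j assume "i < dim_row (col_block A a b)" "j < dim_col (col_block A a b)"
  hence ij: "i < p" "j < b - a" using A unfolding col_block_def by auto
  have "(A * col_block (1\<^sub>m q) a b) $$ (i,j) = (\<Sum>k<q. A $$ (i,k) * col_block (1\<^sub>m q) a b $$ (k,j))"
    using A E ij by (rule index_mult_mat_sum)
  also have "\<dots> = (\<Sum>k<q. if k = j + a then A $$ (i,k) else 0)"
    using ij assms by (intro sum.cong) (auto simp: col_block_def)
  finally show "(A * col_block (1\<^sub>m q) a b) $$ (i,j) = col_block A a b $$ (i,j)"
    using assms ij by (simp add: col_block_def)
qed (use assms in \<open>auto simp: col_block_def\<close>)

lemma hcat_col_block:
  assumes "A \<in> carrier_mat p q" "k \<le> q"
  shows "hcat (col_block A 0 k) (col_block A k q) = A"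
  using assms by (intro eq_matI) (auto simp: hcat_def col_block_def)

locale svd_variation =
  fixes m n :: nat and U S V dX dU dS dV :: "real mat"
  assumes n_le_m: "n \<le> m"
    and U: "U \<in> carrier_mat m m" and S: "S \<in> carrier_mat m n" and V: "V \<in> carrier_mat n n"
    and U_orth: "U\<^sup>T * U = 1\<^sub>m m" and V_orth: "V\<^sup>T * V = 1\<^sub>m n"
    and S_diag: "diagonal_mat S"
    and variation: "induced_variation m n U S V dX dU dS dV"
begin

lemma dU: "dU \<in> carrier_mat m m"
  and dS: "dS \<in> carrier_mat m n"
  and dV: "dV \<in> carrier_mat n n"
  and dS_diag: "diagonal_mat dS"
  and dU_skew: "U\<^sup>T * dU + dU\<^sup>T * U = 0\<^sub>m m m"
  and dV_skew: "V\<^sup>T * dV + dV\<^sup>T * V = 0\<^sub>m n n"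
  and dX_eq: "dX = dU * S * V\<^sup>T + U * dS * V\<^sup>T + U * S * dV\<^sup>T"
  and dU_lower_block: "(col_block U n m)\<^sup>T * col_block dU n m = 0\<^sub>m (m - n) (m - n)"
  using variation unfolding induced_variation_def by auto

lemma dX: "dX \<in> carrier_mat m n"
proof -
  have "dU * S * V\<^sup>T \<in> carrier_mat m n" "U * dS * V\<^sup>T \<in> carrier_mat m n" "U * S * dV\<^sup>T \<in> carrier_mat m n"
    using U S V dU dS dV by auto
  thus ?thesis unfolding dX_eq by (intro add_carrier_mat)
qed

lemma Omega_U_skew:
  assumes "i < m" "j < m"
  shows "(U\<^sup>T * dU) $$ (j,i) = - (U\<^sup>T * dU) $$ (i,j)"
proof (rule skew_mat_entry[OF _ _ assms])
  have "(U\<^sup>T * dU)\<^sup>T = dU\<^sup>T * U" using U dU transpose_mult[of "U\<^sup>T" m m dU m] by simp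
  thus "U\<^sup>T * dU + (U\<^sup>T * dU)\<^sup>T = 0\<^sub>m m m" using dU_skew by simp
qed (use U dU in auto)

lemma Omega_V_skew:
  assumes "i < n" "j < n"
  shows "(V\<^sup>T * dV) $$ (j,i) = - (V\<^sup>T * dV) $$ (i,j)"
proof (rule skew_mat_entry[OF _ _ assms])
  have "(V\<^sup>T * dV)\<^sup>T = dV\<^sup>T * V" using V dV transpose_mult[of "V\<^sup>T" n n dV n] by simp
  thus "V\<^sup>T * dV + (V\<^sup>T * dV)\<^sup>T = 0\<^sub>m n n" using dV_skew by simp
qed (use V dV in auto)

lemma Omega_U_lower_block:
  assumes "n \<le> i" "i < m" "n \<le> j" "j < m"
  shows "(U\<^sup>T * dU) $$ (i,j) = 0"
proof -
  have "(U\<^sup>T * dU) $$ (i,j) = (\<Sum>k<m. U $$ (k,i) * dU $$ (k,j))"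
    using assms U dU by (subst index_mult_mat_sum[of _ m m _ m]) auto
  also have "\<dots> = ((col_block U n m)\<^sup>T * col_block dU n m) $$ (i - n, j - n)"
    using assms U dU unfolding col_block_def by (subst index_mult_mat_sum[of _ "m - n" m _ "m - n"]) auto
  finally show ?thesis using dU_lower_block assms by simp
qed

lemma dU_eq_U_mult: "dU = U * (U\<^sup>T * dU)"
proof -
  have "U * (U\<^sup>T * dU) = (U * U\<^sup>T) * dU"
    using U dU by (intro assoc_mult_mat[symmetric]) auto
  thus ?thesis using orthogonal_mult_transpose[OF U U_orth] dU by simp
qed

lemma dX_mult_V: "dX * V = dU * S + U * dS + U * S * dV\<^sup>T * V"
proof -
  have right_cancel: "A * V\<^sup>T * V = A" if "A \<in> carrier_mat m n" for A
  proof -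
    have "A * V\<^sup>T * V = A * (V\<^sup>T * V)" using that V by (intro assoc_mult_mat) auto
    thus ?thesis using that V_orth by simp
  qed
  have A: "dU * S * V\<^sup>T \<in> carrier_mat m n" and B: "U * dS * V\<^sup>T \<in> carrier_mat m n"
    and C: "U * S * dV\<^sup>T \<in> carrier_mat m n"
    using U S V dU dS dV by auto
  have "dX * V = (dU * S * V\<^sup>T + U * dS * V\<^sup>T) * V + U * S * dV\<^sup>T * V"
    unfolding dX_eq by (rule add_mult_distrib_mat[OF add_carrier_mat[OF B] C V])
  also have "(dU * S * V\<^sup>T + U * dS * V\<^sup>T) * V = dU * S * V\<^sup>T * V + U * dS * V\<^sup>T * V"
    by (rule add_mult_distrib_mat[OF A B V])
  finally show ?thesis using right_cancel[of "dU * S"] right_cancel[of "U * dS"] U S dU dS by simp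
qed

lemma residual_eq: "dX * V - U * dS - U * S * dV\<^sup>T * V = dU * S"
  using dX_mult_V U S V dU dS dV by (intro eq_matI) auto

lemma rotated_variation: "U\<^sup>T * dX * V = U\<^sup>T * dU * S + dS + S * (dV\<^sup>T * V)"
proof -
  have left_cancel: "U\<^sup>T * (U * A) = A" if "A \<in> carrier_mat m k" for A k
  proof -
    have "U\<^sup>T * (U * A) = (U\<^sup>T * U) * A" using that U by (intro assoc_mult_mat[symmetric]) auto
    thus ?thesis using that U_orth by simp
  qed
  have A: "dU * S \<in> carrier_mat m n" and B: "U * dS \<in> carrier_mat m n"
    and C: "U * S * dV\<^sup>T * V \<in> carrier_mat m n" and SV: "S * (dV\<^sup>T * V) \<in> carrier_mat m n"
    using U S V dU dS dV by auto
  have "U\<^sup>T * dX * V = U\<^sup>T * (dX * V)"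
    using U dX V by (intro assoc_mult_mat) auto
  also have "\<dots> = U\<^sup>T * (dU * S + U * dS) + U\<^sup>T * (U * S * dV\<^sup>T * V)"
    unfolding dX_mult_V using U A B C by (intro mult_add_distrib_mat[of _ m m]) auto
  also have "U\<^sup>T * (dU * S + U * dS) = U\<^sup>T * (dU * S) + U\<^sup>T * (U * dS)"
    using U A B by (intro mult_add_distrib_mat[of _ m m]) auto
  also have "U\<^sup>T * (dU * S) = U\<^sup>T * dU * S" using U dU S by (intro assoc_mult_mat[symmetric]) auto
  also have "U\<^sup>T * (U * dS) = dS" using left_cancel dS .
  also have "U * S * dV\<^sup>T * V = U * (S * (dV\<^sup>T * V))"
    using U S dV V by (simp add: assoc_mult_mat[of U m m "S * dV\<^sup>T" n V n])
  also have "U\<^sup>T * (U * (S * (dV\<^sup>T * V))) = S * (dV\<^sup>T * V)" using left_cancel SV .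
  finally show ?thesis .
qed

lemma rotated_variation_entry:
  assumes "i < m" "j < n"
  shows "(U\<^sup>T * dX * V) $$ (i,j)
    = (U\<^sup>T * dU) $$ (i,j) * S $$ (j,j) + dS $$ (i,j) - (if i < n then S $$ (i,i) * (V\<^sup>T * dV) $$ (i,j) else 0)"
proof -
  have dVV: "dV\<^sup>T * V \<in> carrier_mat n n" using dV V by auto
  have "(dV\<^sup>T * V) $$ (i,j) = - (V\<^sup>T * dV) $$ (i,j)" if "i < n"
    using that assms dV V Omega_V_skew[of i j] by (simp add: index_mult_mat_sum[of _ n n _ n] mult.commute
        del: index_mult_mat)
  moreover have "(U\<^sup>T * dU * S) $$ (i,j) = (U\<^sup>T * dU) $$ (i,j) * S $$ (j,j)"
    using assms U dU n_le_m by (intro index_mult_diagonal_right[OF S S_diag]) auto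
  moreover have "(S * (dV\<^sup>T * V)) $$ (i,j) = (if i < n then S $$ (i,i) * (dV\<^sup>T * V) $$ (i,j) else 0)"
    using assms by (rule index_mult_diagonal_left[OF S S_diag dVV])
  ultimately show ?thesis using assms U S dU dS dVV unfolding rotated_variation by auto
qed

lemma dS_eq: "dS = diag_part (U\<^sup>T * dX * V)"
proof (rule eq_matI)
  fix i j assume "i < dim_row (diag_part (U\<^sup>T * dX * V))" "j < dim_col (diag_part (U\<^sup>T * dX * V))"
  hence ij: "i < m" "j < n" using U V dX unfolding diag_part_def by auto
  show "dS $$ (i,j) = diag_part (U\<^sup>T * dX * V) $$ (i,j)"
  proof (cases "i = j")
    case True
    thus ?thesis using ij n_le_m rotated_variation_entry[OF ij] Omega_U_skew[of i i] Omega_V_skew[of i i]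
      U V unfolding diag_part_def by simp
  next
    case False
    thus ?thesis using ij dS_diag dS U V unfolding diag_part_def diagonal_mat_def by simp
  qed
qed (use dS U V in \<open>auto simp: diag_part_def\<close>)

lemma rotated_variation_scaled_entry:
  assumes "i < n" "j < n"
  shows "(S\<^sup>T * U\<^sup>T * dX * V) $$ (i,j) = S $$ (i,i) * (U\<^sup>T * dX * V) $$ (i,j)"
proof -
  have St: "S\<^sup>T \<in> carrier_mat n m" and "diagonal_mat S\<^sup>T"
    using S S_diag unfolding diagonal_mat_def by auto
  have P: "U\<^sup>T * dX * V \<in> carrier_mat m n" using U dX V by auto
  have "S\<^sup>T * U\<^sup>T * dX * V = S\<^sup>T * (U\<^sup>T * dX * V)"
    using S U dX V by (simp add: assoc_mult_mat[of "S\<^sup>T" n m "U\<^sup>T * dX" n V n]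
        assoc_mult_mat[of "S\<^sup>T" n m "U\<^sup>T" m dX n])
  thus ?thesis
    using index_mult_diagonal_left[OF St \<open>diagonal_mat S\<^sup>T\<close> P assms] assms S n_le_m by simp
qed

lemma Omega_V_eq:
  assumes distinct: "\<forall>i<n. \<forall>j<n. i \<noteq> j \<longrightarrow> \<bar>S $$ (i,i)\<bar> \<noteq> \<bar>S $$ (j,j)\<bar>"
  shows "V\<^sup>T * dV = 2 \<cdot>\<^sub>m ((K_mat n S)\<^sup>T \<circ>\<^sub>h sym_mat (S\<^sup>T * U\<^sup>T * dX * V))"
    (is "_ = 2 \<cdot>\<^sub>m (?K\<^sup>T \<circ>\<^sub>h sym_mat ?M)")
proof (rule eq_matI)
  have M: "?M \<in> carrier_mat n n" using S U dX V by auto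
  fix i j
  assume "i < dim_row (2 \<cdot>\<^sub>m (?K\<^sup>T \<circ>\<^sub>h sym_mat ?M))"
    and "j < dim_col (2 \<cdot>\<^sub>m (?K\<^sup>T \<circ>\<^sub>h sym_mat ?M))"
  hence ij: "i < n" "j < n" by (auto simp: hadamard_def K_mat_def)
  have rhs: "(2 \<cdot>\<^sub>m (?K\<^sup>T \<circ>\<^sub>h sym_mat ?M)) $$ (i,j) = ?K $$ (j,i) * (?M $$ (j,i) + ?M $$ (i,j))"
    using ij S V unfolding hadamard_def sym_mat_def K_mat_def by (simp add: carrier_matD)
  show "(V\<^sup>T * dV) $$ (i,j) = (2 \<cdot>\<^sub>m (?K\<^sup>T \<circ>\<^sub>h sym_mat ?M)) $$ (i,j)"
  proof (cases "i = j")
    case True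
    thus ?thesis unfolding rhs using Omega_V_skew[OF ij] ij unfolding K_mat_def by simp
  next
    case False
    have "\<bar>S $$ (i,i)\<bar> \<noteq> \<bar>S $$ (j,j)\<bar>" using distinct ij False by blast
    hence "S $$ (i,i)^2 \<noteq> S $$ (j,j)^2" by (auto simp: power2_eq_iff)
    moreover have "dS $$ (i,j) = 0" "dS $$ (j,i) = 0"
      using dS_diag dS ij False n_le_m unfolding diagonal_mat_def by auto
    hence "?M $$ (j,i) + ?M $$ (i,j) = (S $$ (j,j)^2 - S $$ (i,i)^2) * (V\<^sup>T * dV) $$ (i,j)"
      using ij n_le_m rotated_variation_scaled_entry[of i j] rotated_variation_scaled_entry[of j i]
        rotated_variation_entry[of i j] rotated_variation_entry[of j i]
        Omega_U_skew[of i j] Omega_V_skew[of i j]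
      by (simp add: algebra_simps power2_eq_square)
    ultimately show ?thesis unfolding rhs using ij False unfolding K_mat_def by simp
  qed
qed (use V dV in \<open>auto simp: hadamard_def K_mat_def\<close>)

lemma dV_eq:
  assumes "\<forall>i<n. \<forall>j<n. i \<noteq> j \<longrightarrow> \<bar>S $$ (i,i)\<bar> \<noteq> \<bar>S $$ (j,j)\<bar>"
  shows "dV = 2 \<cdot>\<^sub>m (V * ((K_mat n S)\<^sup>T \<circ>\<^sub>h sym_mat (S\<^sup>T * U\<^sup>T * dX * V)))"
proof -
  have "V * (V\<^sup>T * dV) = (V * V\<^sup>T) * dV"
    using V dV by (intro assoc_mult_mat[symmetric]) auto
  hence "dV = V * (V\<^sup>T * dV)" using orthogonal_mult_transpose[OF V V_orth] dV by simp
  also have "\<dots> = 2 \<cdot>\<^sub>m (V * ((K_mat n S)\<^sup>T \<circ>\<^sub>h sym_mat (S\<^sup>T * U\<^sup>T * dX * V)))"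
    unfolding Omega_V_eq[OF assms] using V S U dX
    by (intro mult_smult_distrib[of V n n _ n]) (auto simp: K_mat_def)
  finally show ?thesis .
qed

lemma mat_inv_top_block:
  assumes "\<forall>i<n. S $$ (i,i) \<noteq> 0"
  shows "mat_inv (row_block S 0 n) = mat n n (\<lambda>(i,j). if i = j then 1 / S $$ (i,i) else 0)"
proof -
  have Sn: "row_block S 0 n \<in> carrier_mat n n"
    and Sn_entry: "\<And>i j. i < n \<Longrightarrow> j < n \<Longrightarrow> row_block S 0 n $$ (i,j) = S $$ (i,j)"
    using S unfolding row_block_def by auto
  have "diagonal_mat (row_block S 0 n)"
    using S_diag S n_le_m Sn Sn_entry unfolding diagonal_mat_def by auto
  hence "mat_inv (row_block S 0 n) = mat n n (\<lambda>(i,j). if i = j then 1 / row_block S 0 n $$ (i,i) else 0)"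
    using mat_inv_diagonal[OF Sn] Sn_entry assms by simp
  also have "\<dots> = mat n n (\<lambda>(i,j). if i = j then 1 / S $$ (i,i) else 0)"
    by (rule eq_matI) (auto simp: Sn_entry)
  finally show ?thesis .
qed

lemma mat_inv_top_block_carrier:
  assumes "\<forall>i<n. S $$ (i,i) \<noteq> 0"
  shows "mat_inv (row_block S 0 n) \<in> carrier_mat n n"
  unfolding mat_inv_top_block[OF assms] by auto

lemma mat_inv_top_block_symmetric:
  assumes "\<forall>i<n. S $$ (i,i) \<noteq> 0"
  shows "(mat_inv (row_block S 0 n))\<^sup>T = mat_inv (row_block S 0 n)"
  unfolding mat_inv_top_block[OF assms] by (rule eq_matI) auto

lemma mult_mat_inv_top_block:
  assumes "\<forall>i<n. S $$ (i,i) \<noteq> 0"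
  shows "S * mat_inv (row_block S 0 n) = col_block (1\<^sub>m m) 0 n"
proof (rule eq_matI)
  note Z = mat_inv_top_block_carrier[OF assms]
  fix i j
  assume "i < dim_row (col_block (1\<^sub>m m) 0 n :: real mat)"
    and "j < dim_col (col_block (1\<^sub>m m) 0 n :: real mat)"
  hence ij: "i < m" "j < n" unfolding col_block_def by auto
  show "(S * mat_inv (row_block S 0 n)) $$ (i,j) = col_block (1\<^sub>m m) 0 n $$ (i,j)"
    using index_mult_diagonal_left[OF S S_diag Z ij] ij assms n_le_m
    unfolding mat_inv_top_block[OF assms] col_block_def by auto
qed (use S mat_inv_top_block_carrier[OF assms] in \<open>auto simp: col_block_def\<close>)

lemma dU_left_block:
  assumes "\<forall>i<n. S $$ (i,i) \<noteq> 0"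
  shows "dU * S * mat_inv (row_block S 0 n) = col_block dU 0 n"
proof -
  have "dU * S * mat_inv (row_block S 0 n) = dU * (S * mat_inv (row_block S 0 n))"
    using dU S mat_inv_top_block_carrier[OF assms] by (intro assoc_mult_mat) auto
  thus ?thesis unfolding mult_mat_inv_top_block[OF assms] using dU n_le_m by (simp add: col_block_one_mult)
qed

lemma left_block_transpose_mult_right_block_entry:
  assumes "a < n" "jj < m - n"
  shows "((col_block dU 0 n)\<^sup>T * col_block U n m) $$ (a,jj) = - (U\<^sup>T * dU) $$ (a, jj + n)"
proof -
  have "((col_block dU 0 n)\<^sup>T * col_block U n m) $$ (a,jj) = (\<Sum>l<m. U $$ (l, jj + n) * dU $$ (l,a))"
    using assms U dU n_le_m unfolding col_block_def
    by (subst index_mult_mat_sum[of _ n m _ "m - n"]) (auto simp: mult.commute)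
  also have "\<dots> = (U\<^sup>T * dU) $$ (jj + n, a)"
    using assms U dU n_le_m by (subst index_mult_mat_sum[of _ m m _ m]) auto
  finally show ?thesis using Omega_U_skew[of a "jj + n"] assms n_le_m by simp
qed

lemma dU_right_block:
  "col_block dU n m = - (col_block U 0 n * (col_block dU 0 n)\<^sup>T * col_block U n m)"
proof (rule eq_matI)
  have U1: "col_block U 0 n \<in> carrier_mat m n" and U2: "col_block U n m \<in> carrier_mat m (m - n)"
    and dU1: "(col_block dU 0 n)\<^sup>T \<in> carrier_mat n m"
    using U dU unfolding col_block_def by auto
  fix i jj
  assume "i < dim_row (- (col_block U 0 n * (col_block dU 0 n)\<^sup>T * col_block U n m))"
    and "jj < dim_col (- (col_block U 0 n * (col_block dU 0 n)\<^sup>T * col_block U n m))"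
  hence ij: "i < m" "jj < m - n" using U1 U2 by auto
  have "col_block U 0 n * (col_block dU 0 n)\<^sup>T * col_block U n m
      = col_block U 0 n * ((col_block dU 0 n)\<^sup>T * col_block U n m)"
    by (rule assoc_mult_mat[OF U1 dU1 U2])
  hence "(col_block U 0 n * (col_block dU 0 n)\<^sup>T * col_block U n m) $$ (i,jj)
      = (\<Sum>k<n. U $$ (i,k) * ((col_block dU 0 n)\<^sup>T * col_block U n m) $$ (k,jj))"
    using U1 U2 dU1 ij U
    by (simp add: index_mult_mat_sum[of _ m n _ "m - n"] col_block_def[of U 0 n] del: index_mult_mat)
  also have "\<dots> = - (\<Sum>k<n. U $$ (i,k) * (U\<^sup>T * dU) $$ (k, jj + n))"
    using ij left_block_transpose_mult_right_block_entry by (simp add: sum_negf[symmetric])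
  also have "(\<Sum>k<n. U $$ (i,k) * (U\<^sup>T * dU) $$ (k, jj + n))
      = (\<Sum>k<m. U $$ (i,k) * (U\<^sup>T * dU) $$ (k, jj + n))"
    using Omega_U_lower_block[of _ "jj + n"] ij n_le_m by (intro sum.mono_neutral_left) auto
  also have "\<dots> = dU $$ (i, jj + n)"
    using ij U dU by (subst dU_eq_U_mult, subst index_mult_mat_sum[of _ m m _ m]) auto
  finally show "col_block dU n m $$ (i,jj)
      = (- (col_block U 0 n * (col_block dU 0 n)\<^sup>T * col_block U n m)) $$ (i,jj)"
    using ij U1 U2 dU1 dU unfolding col_block_def[of dU n m] by (simp del: index_mult_mat(1))
qed (use U dU in \<open>auto simp: col_block_def\<close>)

lemma dU_eq:
  assumes "\<forall>i<n. S $$ (i,i) \<noteq> 0"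
  shows "dU = hcat ((dX * V - U * dS - U * S * dV\<^sup>T * V) * mat_inv (row_block S 0 n))
    (- (col_block U 0 n * mat_inv (row_block S 0 n) * (dX * V - U * dS - U * S * dV\<^sup>T * V)\<^sup>T
        * col_block U n m))"
proof -
  define C where "C = dX * V - U * dS - U * S * dV\<^sup>T * V"
  define Z where "Z = mat_inv (row_block S 0 n)"
  have C: "C \<in> carrier_mat m n" unfolding C_def residual_eq using dU S by auto
  have Z: "Z \<in> carrier_mat n n" and "Z\<^sup>T = Z"
    unfolding Z_def using mat_inv_top_block_carrier mat_inv_top_block_symmetric assms by auto
  have U1: "col_block U 0 n \<in> carrier_mat m n" using U unfolding col_block_def by auto
  have left: "C * Z = col_block dU 0 n"
    unfolding C_def Z_def residual_eq using assms by (rule dU_left_block)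
  have "col_block U 0 n * Z * C\<^sup>T = col_block U 0 n * (C * Z)\<^sup>T"
    using U1 Z C \<open>Z\<^sup>T = Z\<close> by (simp add: transpose_mult[OF C Z])
  hence "col_block U 0 n * Z * C\<^sup>T * col_block U n m = - col_block dU n m"
    unfolding left dU_right_block using U dU
    by (simp add: col_block_def)
  hence "dU = hcat (C * Z) (- (col_block U 0 n * Z * C\<^sup>T * col_block U n m))"
    unfolding left using hcat_col_block[OF dU n_le_m] dU by simp
  thus ?thesis unfolding C_def Z_def .
qed

end

lemma frob_mult_right:
  assumes "A \<in> carrier_mat p q" "B \<in> carrier_mat p r" "C \<in> carrier_mat r q"
  shows "A :\<^sub>F (B * C) = (B\<^sup>T * A) :\<^sub>F C"
proof -
  have [simp]: "dim_row (B\<^sup>T * A) = r" "dim_col (B\<^sup>T * A) = q" using assms by auto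
  have "A :\<^sub>F (B * C) = (\<Sum>i<p. \<Sum>j<q. A $$ (i,j) * (\<Sum>k<r. B $$ (i,k) * C $$ (k,j)))"
    using assms unfolding frob_def
    by (intro sum.cong) (auto simp: index_mult_mat_sum[OF assms(2,3)] simp del: index_mult_mat)
  also have "\<dots> = (\<Sum>k<r. \<Sum>j<q. (\<Sum>i<p. B $$ (i,k) * A $$ (i,j)) * C $$ (k,j))"
    by (simp add: sum_distrib_left sum_distrib_right mult_ac sum.swap[of _ "{..<p}"]
        sum.swap[of _ "{..<q}" "{..<r}"])
  also have "\<dots> = (B\<^sup>T * A) :\<^sub>F C"
    using assms unfolding frob_def
    by (intro sum.cong refl) (auto simp: index_mult_mat_sum[of "B\<^sup>T" r p A q] simp del: index_mult_mat)
  finally show ?thesis .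
qed

lemma frob_mult_left:
  assumes "A \<in> carrier_mat p q" "B \<in> carrier_mat p r" "C \<in> carrier_mat r q"
  shows "A :\<^sub>F (B * C) = (A * C\<^sup>T) :\<^sub>F B"
proof -
  have [simp]: "dim_row (A * C\<^sup>T) = p" "dim_col (A * C\<^sup>T) = r" using assms by auto
  have "A :\<^sub>F (B * C) = (\<Sum>i<p. \<Sum>j<q. A $$ (i,j) * (\<Sum>k<r. B $$ (i,k) * C $$ (k,j)))"
    using assms unfolding frob_def
    by (intro sum.cong) (auto simp: index_mult_mat_sum[OF assms(2,3)] simp del: index_mult_mat)
  also have "\<dots> = (\<Sum>i<p. \<Sum>k<r. (\<Sum>j<q. A $$ (i,j) * C $$ (k,j)) * B $$ (i,k))"
    by (simp add: sum_distrib_left sum_distrib_right mult_ac sum.swap[of _ "{..<q}" "{..<r}"])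
  also have "\<dots> = (A * C\<^sup>T) :\<^sub>F B"
    using assms unfolding frob_def
    by (intro sum.cong refl) (auto simp: index_mult_mat_sum[of A p q "C\<^sup>T" r] simp del: index_mult_mat)
  finally show ?thesis .
qed

lemma frob_transpose:
  assumes "A \<in> carrier_mat q p" "B \<in> carrier_mat p q"
  shows "A :\<^sub>F B\<^sup>T = A\<^sup>T :\<^sub>F B"
  using assms unfolding frob_def by (simp add: sum.swap[of _ "{..<q}" "{..<p}"] mult.commute)

lemma frob_add_left:
  assumes "A \<in> carrier_mat p q" "B \<in> carrier_mat p q" "C \<in> carrier_mat p q"
  shows "(A + B) :\<^sub>F C = (A :\<^sub>F C) + (B :\<^sub>F C)"
  using assms unfolding frob_def by (simp add: sum.distrib[symmetric] algebra_simps)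

lemma frob_minus_left:
  assumes "A \<in> carrier_mat p q" "B \<in> carrier_mat p q" "C \<in> carrier_mat p q"
  shows "(A - B) :\<^sub>F C = (A :\<^sub>F C) - (B :\<^sub>F C)"
  using assms unfolding frob_def by (simp add: sum_subtractf[symmetric] algebra_simps)

lemma frob_minus_right:
  assumes "A \<in> carrier_mat p q" "B \<in> carrier_mat p q" "C \<in> carrier_mat p q"
  shows "A :\<^sub>F (B - C) = (A :\<^sub>F B) - (A :\<^sub>F C)"
  using assms unfolding frob_def by (simp add: sum_subtractf[symmetric] algebra_simps)

lemma frob_uminus_right:
  assumes "A \<in> carrier_mat p q" "B \<in> carrier_mat p q"
  shows "A :\<^sub>F (- B) = - (A :\<^sub>F B)"
  using assms unfolding frob_def by (simp add: sum_negf[symmetric])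

lemma frob_smult_left:
  assumes "A \<in> carrier_mat p q" "B \<in> carrier_mat p q"
  shows "(c \<cdot>\<^sub>m A) :\<^sub>F B = c * (A :\<^sub>F B)"
  using assms unfolding frob_def by (simp add: sum_distrib_left mult_ac)

lemma frob_smult_right:
  assumes "A \<in> carrier_mat p q" "B \<in> carrier_mat p q"
  shows "A :\<^sub>F (c \<cdot>\<^sub>m B) = c * (A :\<^sub>F B)"
  using assms unfolding frob_def by (simp add: sum_distrib_left mult_ac)

lemma frob_diag_part:
  assumes "A \<in> carrier_mat p q" "B \<in> carrier_mat p q"
  shows "A :\<^sub>F diag_part B = diag_part A :\<^sub>F B"
  using assms unfolding frob_def diag_part_def by (intro sum.cong refl) auto

lemma frob_hadamard:
  assumes "A \<in> carrier_mat p q" "B \<in> carrier_mat p q" "K \<in> carrier_mat p q"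
  shows "A :\<^sub>F (K \<circ>\<^sub>h B) = (K \<circ>\<^sub>h A) :\<^sub>F B"
  using assms unfolding frob_def hadamard_def by (intro sum.cong refl) auto

lemma frob_sym_mat:
  assumes "A \<in> carrier_mat p p" "B \<in> carrier_mat p p"
  shows "A :\<^sub>F sym_mat B = sym_mat A :\<^sub>F B"
proof -
  have "A :\<^sub>F sym_mat B = (\<Sum>i<p. \<Sum>j<p. A $$ (i,j) * (1/2) * B $$ (j,i))
      + (\<Sum>i<p. \<Sum>j<p. A $$ (i,j) * (1/2) * B $$ (i,j))"
    using assms unfolding frob_def sym_mat_def by (simp add: sum.distrib[symmetric] algebra_simps)
  also have "(\<Sum>i<p. \<Sum>j<p. A $$ (i,j) * (1/2) * B $$ (j,i))
      = (\<Sum>i<p. \<Sum>j<p. A $$ (j,i) * (1/2) * B $$ (i,j))"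
    by (rule sum.swap)
  also have "\<dots> + (\<Sum>i<p. \<Sum>j<p. A $$ (i,j) * (1/2) * B $$ (i,j)) = sym_mat A :\<^sub>F B"
    using assms unfolding frob_def sym_mat_def by (simp add: sum.distrib[symmetric] algebra_simps)
  finally show ?thesis .
qed

lemma frob_hcat:
  assumes "G \<in> carrier_mat p q" "k \<le> q" "A \<in> carrier_mat p k" "B \<in> carrier_mat p (q - k)"
  shows "G :\<^sub>F hcat A B = (col_block G 0 k :\<^sub>F A) + (col_block G k q :\<^sub>F B)"
proof -
  have [simp]: "dim_row G = p" "dim_col G = q" "dim_row A = p" "dim_col A = k"
    "dim_row B = p" "dim_col B = q - k"
    using assms by auto
  have row: "(\<Sum>j<q. G $$ (i,j) * hcat A B $$ (i,j))
      = (\<Sum>j<k. G $$ (i,j) * A $$ (i,j)) + (\<Sum>j\<in>{k..<q}. G $$ (i,j) * B $$ (i,j - k))"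
    if "i < p" for i
  proof -
    have "{..<q} = {..<k} \<union> {k..<q}" using assms by auto
    hence "(\<Sum>j<q. G $$ (i,j) * hcat A B $$ (i,j))
        = (\<Sum>j<k. G $$ (i,j) * hcat A B $$ (i,j)) + (\<Sum>j\<in>{k..<q}. G $$ (i,j) * hcat A B $$ (i,j))"
      by (simp add: sum.union_disjoint ivl_disj_int_one(2) lessThan_atLeast0)
    also have "(\<Sum>j<k. G $$ (i,j) * hcat A B $$ (i,j)) = (\<Sum>j<k. G $$ (i,j) * A $$ (i,j))"
      using that unfolding hcat_def by (intro sum.cong refl) auto
    also have "(\<Sum>j\<in>{k..<q}. G $$ (i,j) * hcat A B $$ (i,j)) = (\<Sum>j\<in>{k..<q}. G $$ (i,j) * B $$ (i,j - k))"
      using that assms(2) unfolding hcat_def by (intro sum.cong refl) auto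
    finally show ?thesis .
  qed
  have "G :\<^sub>F hcat A B
      = (\<Sum>i<p. (\<Sum>j<k. G $$ (i,j) * A $$ (i,j)) + (\<Sum>j\<in>{k..<q}. G $$ (i,j) * B $$ (i,j - k)))"
    unfolding frob_def using row by (intro sum.cong) auto
  also have "\<dots> = (col_block G 0 k :\<^sub>F A) + (col_block G k q :\<^sub>F B)"
    using assms unfolding frob_def col_block_def
    by (simp add: sum.distrib sum.atLeastLessThan_shift_0[of _ k q] atLeast0LessThan add.commute)
  finally show ?thesis .
qed

lemma frob_mult_sandwich:
  assumes "A \<in> carrier_mat p q" "P \<in> carrier_mat r p" "X \<in> carrier_mat r s" "Q \<in> carrier_mat s q"
  shows "A :\<^sub>F (P\<^sup>T * X * Q) = (P * A * Q\<^sup>T) :\<^sub>F X"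
proof -
  have "A :\<^sub>F (P\<^sup>T * X * Q) = (A * Q\<^sup>T) :\<^sub>F (P\<^sup>T * X)"
    using assms by (intro frob_mult_left) auto
  also have "\<dots> = (P * (A * Q\<^sup>T)) :\<^sub>F X"
    using assms frob_mult_right[of "A * Q\<^sup>T" p s "P\<^sup>T" r X] by auto
  also have "P * (A * Q\<^sup>T) = P * A * Q\<^sup>T"
    using assms by (intro assoc_mult_mat[symmetric]) auto
  finally show ?thesis .
qed

lemma frob_mult_transpose_middle:
  assumes "A \<in> carrier_mat p q" "B \<in> carrier_mat p r" "C \<in> carrier_mat s r" "E \<in> carrier_mat s q"
  shows "A :\<^sub>F (B * C\<^sup>T * E) = (E * A\<^sup>T * B) :\<^sub>F C"
proof -
  have "A :\<^sub>F (B * C\<^sup>T * E) = (A * E\<^sup>T) :\<^sub>F (B * C\<^sup>T)"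
    using assms by (intro frob_mult_left) auto
  also have "\<dots> = (B\<^sup>T * (A * E\<^sup>T)) :\<^sub>F C\<^sup>T"
    using assms by (intro frob_mult_right) auto
  also have "\<dots> = (B\<^sup>T * (A * E\<^sup>T))\<^sup>T :\<^sub>F C"
    using assms by (intro frob_transpose) auto
  also have "(B\<^sup>T * (A * E\<^sup>T))\<^sup>T = (A * E\<^sup>T)\<^sup>T * B"
    using assms transpose_mult[of "B\<^sup>T" r p "A * E\<^sup>T" s] by auto
  also have "(A * E\<^sup>T)\<^sup>T = E * A\<^sup>T"
    using assms transpose_mult[of A p q "E\<^sup>T" s] by auto
  finally show ?thesis .
qed

lemma frob_dU_formula_adjoint:
  fixes G U1 U2 C Z :: "real mat"
  assumes G: "G \<in> carrier_mat m m" and "n \<le> m" and U1: "U1 \<in> carrier_mat m n"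
    and U2: "U2 \<in> carrier_mat m (m - n)" and C: "C \<in> carrier_mat m n"
    and Z: "Z \<in> carrier_mat n n" and "Z\<^sup>T = Z"
  shows "G :\<^sub>F hcat (C * Z) (- (U1 * Z * C\<^sup>T * U2))
    = (col_block G 0 n * Z - U2 * (col_block G n m)\<^sup>T * U1 * Z) :\<^sub>F C"
proof -
  define G1 G2 where "G1 = col_block G 0 n" and "G2 = col_block G n m"
  have G1: "G1 \<in> carrier_mat m n" and G2: "G2 \<in> carrier_mat m (m - n)"
    unfolding G1_def G2_def col_block_def using G by auto
  have "G :\<^sub>F hcat (C * Z) (- (U1 * Z * C\<^sup>T * U2))
      = (G1 :\<^sub>F (C * Z)) + (G2 :\<^sub>F (- (U1 * Z * C\<^sup>T * U2)))"
    unfolding G1_def G2_def using assms by (intro frob_hcat) auto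
  also have "G1 :\<^sub>F (C * Z) = (G1 * Z) :\<^sub>F C"
    using frob_mult_left[OF G1 C Z] \<open>Z\<^sup>T = Z\<close> by simp
  also have "G2 :\<^sub>F (- (U1 * Z * C\<^sup>T * U2)) = - (G2 :\<^sub>F (U1 * Z * C\<^sup>T * U2))"
    by (rule frob_uminus_right[OF G2]) (use assms in auto)
  also have "G2 :\<^sub>F (U1 * Z * C\<^sup>T * U2) = (U2 * G2\<^sup>T * (U1 * Z)) :\<^sub>F C"
    by (rule frob_mult_transpose_middle[OF G2 _ C U2]) (use assms in auto)
  also have "U2 * G2\<^sup>T * (U1 * Z) = U2 * G2\<^sup>T * U1 * Z"
    using U1 U2 G2 Z by (intro assoc_mult_mat[symmetric]) auto
  also have "(G1 * Z) :\<^sub>F C + - ((U2 * G2\<^sup>T * U1 * Z) :\<^sub>F C)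
      = (G1 * Z - U2 * G2\<^sup>T * U1 * Z) :\<^sub>F C"
    unfolding diff_conv_add_uminus[symmetric]
    by (rule frob_minus_left[symmetric]) (use G1 G2 U1 U2 Z C in auto)
  finally show ?thesis unfolding G1_def G2_def .
qed

lemma frob_dS_formula_adjoint:
  assumes "G \<in> carrier_mat m n" "U \<in> carrier_mat m m" "V \<in> carrier_mat n n" "dX \<in> carrier_mat m n"
  shows "G :\<^sub>F diag_part (U\<^sup>T * dX * V) = (U * diag_part G * V\<^sup>T) :\<^sub>F dX"
  using assms frob_diag_part[of G m n "U\<^sup>T * dX * V"]
    frob_mult_sandwich[of "diag_part G" m n U m dX n V] by auto

lemma frob_residual_adjoint:
  assumes D: "D \<in> carrier_mat m n" and U: "U \<in> carrier_mat m m" and S: "S \<in> carrier_mat m n"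
    and V: "V \<in> carrier_mat n n" and dX: "dX \<in> carrier_mat m n"
    and dS: "dS \<in> carrier_mat m n" and dV: "dV \<in> carrier_mat n n"
  shows "D :\<^sub>F (dX * V - U * dS - U * S * dV\<^sup>T * V)
    = ((D * V\<^sup>T) :\<^sub>F dX) - ((U\<^sup>T * D) :\<^sub>F dS) - ((V * D\<^sup>T * U * S) :\<^sub>F dV)"
proof -
  have "D :\<^sub>F (dX * V - U * dS - U * S * dV\<^sup>T * V)
      = (D :\<^sub>F (dX * V)) - (D :\<^sub>F (U * dS)) - (D :\<^sub>F (U * S * dV\<^sup>T * V))"
  proof -
    have "dX * V \<in> carrier_mat m n" "U * dS \<in> carrier_mat m n" "U * S * dV\<^sup>T * V \<in> carrier_mat m n"
      using assms by auto
    thus ?thesis by (simp add: frob_minus_right[OF D] minus_carrier_mat del: assoc_mult_mat)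
  qed
  also have "D :\<^sub>F (dX * V) = (D * V\<^sup>T) :\<^sub>F dX" by (rule frob_mult_left[OF D dX V])
  also have "D :\<^sub>F (U * dS) = (U\<^sup>T * D) :\<^sub>F dS" by (rule frob_mult_right[OF D U dS])
  also have "D :\<^sub>F (U * S * dV\<^sup>T * V) = (V * D\<^sup>T * (U * S)) :\<^sub>F dV"
    using assms by (intro frob_mult_transpose_middle) auto
  also have "V * D\<^sup>T * (U * S) = V * D\<^sup>T * U * S"
    using assms by (intro assoc_mult_mat[symmetric]) auto
  finally show ?thesis .
qed

lemma frob_dV_formula_adjoint:
  assumes G: "G \<in> carrier_mat n n" and U: "U \<in> carrier_mat m m" and S: "S \<in> carrier_mat m n"
    and V: "V \<in> carrier_mat n n" and dX: "dX \<in> carrier_mat m n" and K: "K \<in> carrier_mat n n"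
  shows "G :\<^sub>F (2 \<cdot>\<^sub>m (V * (K\<^sup>T \<circ>\<^sub>h sym_mat (S\<^sup>T * U\<^sup>T * dX * V))))
    = 2 * ((U * S * sym_mat (K\<^sup>T \<circ>\<^sub>h (V\<^sup>T * G)) * V\<^sup>T) :\<^sub>F dX)"
proof -
  define M where "M = S\<^sup>T * U\<^sup>T * dX * V"
  define Y where "Y = sym_mat (K\<^sup>T \<circ>\<^sub>h (V\<^sup>T * G))"
  have M: "M \<in> carrier_mat n n" and Y: "Y \<in> carrier_mat n n"
    unfolding M_def Y_def using assms by auto
  have "G :\<^sub>F (2 \<cdot>\<^sub>m (V * (K\<^sup>T \<circ>\<^sub>h sym_mat M))) = 2 * (G :\<^sub>F (V * (K\<^sup>T \<circ>\<^sub>h sym_mat M)))"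
    using assms M by (intro frob_smult_right) auto
  also have "G :\<^sub>F (V * (K\<^sup>T \<circ>\<^sub>h sym_mat M)) = (V\<^sup>T * G) :\<^sub>F (K\<^sup>T \<circ>\<^sub>h sym_mat M)"
    using assms M by (intro frob_mult_right) auto
  also have "\<dots> = (K\<^sup>T \<circ>\<^sub>h (V\<^sup>T * G)) :\<^sub>F sym_mat M"
    using assms M by (intro frob_hadamard) auto
  also have "\<dots> = Y :\<^sub>F M"
    unfolding Y_def using K M by (intro frob_sym_mat) auto
  also have "\<dots> = Y :\<^sub>F ((U * S)\<^sup>T * dX * V)"
    unfolding M_def using U S by (simp add: transpose_mult[of U m m S n])
  also have "\<dots> = (U * S * Y * V\<^sup>T) :\<^sub>F dX"
    using assms Y by (intro frob_mult_sandwich) auto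
  finally show ?thesis unfolding M_def Y_def .
qed

lemma svd_variation_adjoint:
  fixes U S V dX dS dV C Z K GU GS GV :: "real mat"
  assumes "n \<le> m" and U: "U \<in> carrier_mat m m" and S: "S \<in> carrier_mat m n"
    and V: "V \<in> carrier_mat n n" and dX: "dX \<in> carrier_mat m n"
    and Z: "Z \<in> carrier_mat n n" "Z\<^sup>T = Z" and K: "K \<in> carrier_mat n n"
    and GU: "GU \<in> carrier_mat m m" and GS: "GS \<in> carrier_mat m n" and GV: "GV \<in> carrier_mat n n"
    and dS_def: "dS = diag_part (U\<^sup>T * dX * V)"
    and dV_def: "dV = 2 \<cdot>\<^sub>m (V * (K\<^sup>T \<circ>\<^sub>h sym_mat (S\<^sup>T * U\<^sup>T * dX * V)))"
    and C_def: "C = dX * V - U * dS - U * S * dV\<^sup>T * V"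
  defines "D \<equiv> col_block GU 0 n * Z - col_block U n m * (col_block GU n m)\<^sup>T * col_block U 0 n * Z"
  shows "(GU :\<^sub>F hcat (C * Z) (- (col_block U 0 n * Z * C\<^sup>T * col_block U n m)))
      + (GS :\<^sub>F dS) + (GV :\<^sub>F dV)
    = (D * V\<^sup>T + U * diag_part (GS - U\<^sup>T * D) * V\<^sup>T
       + 2 \<cdot>\<^sub>m (U * S * sym_mat (K\<^sup>T \<circ>\<^sub>h (V\<^sup>T * (GV - V * D\<^sup>T * U * S))) * V\<^sup>T)) :\<^sub>F dX"
proof -
  have U1: "col_block U 0 n \<in> carrier_mat m n" and U2: "col_block U n m \<in> carrier_mat m (m - n)"
    and GU1: "col_block GU 0 n \<in> carrier_mat m n" and GU2: "col_block GU n m \<in> carrier_mat m (m - n)"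
    using U GU unfolding col_block_def by auto
  have dS: "dS \<in> carrier_mat m n" unfolding dS_def using U V dX by auto
  have dV: "dV \<in> carrier_mat n n" unfolding dV_def using V K by auto
  have C: "C \<in> carrier_mat m n" unfolding C_def using U S V dX dS dV by auto
  have D: "D \<in> carrier_mat m n" unfolding D_def using U1 U2 GU1 GU2 Z by auto
  have UD: "U\<^sup>T * D \<in> carrier_mat m n" and VDUS: "V * D\<^sup>T * U * S \<in> carrier_mat n n"
    using U S V D by (meson mult_carrier_mat transpose_carrier_mat)+
  have GSD: "GS - U\<^sup>T * D \<in> carrier_mat m n" and GVD: "GV - V * D\<^sup>T * U * S \<in> carrier_mat n n"
    using U S V GS GV D by auto
  have "GU :\<^sub>F hcat (C * Z) (- (col_block U 0 n * Z * C\<^sup>T * col_block U n m)) = D :\<^sub>F C"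
    unfolding D_def using GU \<open>n \<le> m\<close> U1 U2 C Z by (rule frob_dU_formula_adjoint)
  also have "\<dots> = ((D * V\<^sup>T) :\<^sub>F dX) - ((U\<^sup>T * D) :\<^sub>F dS) - ((V * D\<^sup>T * U * S) :\<^sub>F dV)"
    unfolding C_def using D U S V dX dS dV by (rule frob_residual_adjoint)
  finally have GU_dU: "GU :\<^sub>F hcat (C * Z) (- (col_block U 0 n * Z * C\<^sup>T * col_block U n m))
    = ((D * V\<^sup>T) :\<^sub>F dX) - ((U\<^sup>T * D) :\<^sub>F dS) - ((V * D\<^sup>T * U * S) :\<^sub>F dV)" .
  have "(GS :\<^sub>F dS) - ((U\<^sup>T * D) :\<^sub>F dS) = (GS - U\<^sup>T * D) :\<^sub>F dS"
    by (rule frob_minus_left[OF GS UD dS, symmetric])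
  also have "\<dots> = (U * diag_part (GS - U\<^sup>T * D) * V\<^sup>T) :\<^sub>F dX"
    unfolding dS_def using GSD U V dX by (rule frob_dS_formula_adjoint)
  finally have GS_dS: "(GS :\<^sub>F dS) - ((U\<^sup>T * D) :\<^sub>F dS) = (U * diag_part (GS - U\<^sup>T * D) * V\<^sup>T) :\<^sub>F dX" .
  have "(GV :\<^sub>F dV) - ((V * D\<^sup>T * U * S) :\<^sub>F dV) = (GV - V * D\<^sup>T * U * S) :\<^sub>F dV"
    by (rule frob_minus_left[OF GV VDUS dV, symmetric])
  also have "\<dots> = 2 * ((U * S * sym_mat (K\<^sup>T \<circ>\<^sub>h (V\<^sup>T * (GV - V * D\<^sup>T * U * S))) * V\<^sup>T) :\<^sub>F dX)"
    unfolding dV_def using GVD U S V dX K by (rule frob_dV_formula_adjoint)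
  finally have GV_dV: "(GV :\<^sub>F dV) - ((V * D\<^sup>T * U * S) :\<^sub>F dV)
    = 2 * ((U * S * sym_mat (K\<^sup>T \<circ>\<^sub>h (V\<^sup>T * (GV - V * D\<^sup>T * U * S))) * V\<^sup>T) :\<^sub>F dX)" .
  have P1: "D * V\<^sup>T \<in> carrier_mat m n" using D V by simp
  have P2: "U * diag_part (GS - U\<^sup>T * D) * V\<^sup>T \<in> carrier_mat m n"
    using U GSD V by (meson diag_part_carrier mult_carrier_mat transpose_carrier_mat)
  have "sym_mat (K\<^sup>T \<circ>\<^sub>h (V\<^sup>T * (GV - V * D\<^sup>T * U * S))) \<in> carrier_mat n n"
    using K by simp
  hence P3: "U * S * sym_mat (K\<^sup>T \<circ>\<^sub>h (V\<^sup>T * (GV - V * D\<^sup>T * U * S))) * V\<^sup>T \<in> carrier_mat m n"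
    using U S V by (meson mult_carrier_mat transpose_carrier_mat)
  show ?thesis
    unfolding frob_add_left[OF add_carrier_mat[OF P2] smult_carrier_mat[OF P3] dX]
      frob_add_left[OF P1 P2 dX] frob_smult_left[OF P3 dX]
    using GU_dU GS_dS GV_dV by linarith
qed

theorem proposition1:
  fixes m n :: nat and X U S V dX dU dS dV GU GS GV :: "real mat"
  assumes "n \<le> m"
    and "X \<in> carrier_mat m n" and "U \<in> carrier_mat m m" and "S \<in> carrier_mat m n"
    and "V \<in> carrier_mat n n"
    and "U\<^sup>T * U = 1\<^sub>m m" and "V\<^sup>T * V = 1\<^sub>m n"
    and "diagonal_mat S"
    and "\<forall>i<n. S $$ (i,i) \<noteq> 0"
    and "\<forall>i<n. \<forall>j<n. i \<noteq> j \<longrightarrow> \<bar>S $$ (i,i)\<bar> \<noteq> \<bar>S $$ (j,j)\<bar>"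
    and "X = U * S * V\<^sup>T"
    and "dX \<in> carrier_mat m n"
    and "induced_variation m n U S V dX dU dS dV"
    and "GU \<in> carrier_mat m m" and "GS \<in> carrier_mat m n" and "GV \<in> carrier_mat n n"
  shows
    "let K = K_mat n S;
         Sn = row_block S 0 n;
         U1 = col_block U 0 n; U2 = col_block U n m;
         C = dX * V - U * dS - U * S * dV\<^sup>T * V;
         GU1 = col_block GU 0 n; GU2 = col_block GU n m;
         D = GU1 * mat_inv Sn - U2 * GU2\<^sup>T * U1 * mat_inv Sn
     in dS = diag_part (U\<^sup>T * dX * V)
      \<and> dV = 2 \<cdot>\<^sub>m (V * (K\<^sup>T \<circ>\<^sub>h sym_mat (S\<^sup>T * U\<^sup>T * dX * V)))
      \<and> dU = hcat (C * mat_inv Sn) (- (U1 * mat_inv Sn * C\<^sup>T * U2))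
      \<and> (GU :\<^sub>F dU) + (GS :\<^sub>F dS) + (GV :\<^sub>F dV)
          = (D * V\<^sup>T + U * diag_part (GS - U\<^sup>T * D) * V\<^sup>T
             + 2 \<cdot>\<^sub>m (U * S * sym_mat (K\<^sup>T \<circ>\<^sub>h (V\<^sup>T * (GV - V * D\<^sup>T * U * S))) * V\<^sup>T)) :\<^sub>F dX"
proof -
  interpret svd_variation m n U S V dX dU dS dV
    using assms by unfold_locales auto
  define D where "D = col_block GU 0 n * mat_inv (row_block S 0 n)
    - col_block U n m * (col_block GU n m)\<^sup>T * col_block U 0 n * mat_inv (row_block S 0 n)"
  have "(GU :\<^sub>F dU) + (GS :\<^sub>F dS) + (GV :\<^sub>F dV)
      = (D * V\<^sup>T + U * diag_part (GS - U\<^sup>T * D) * V\<^sup>T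
         + 2 \<cdot>\<^sub>m (U * S * sym_mat ((K_mat n S)\<^sup>T \<circ>\<^sub>h (V\<^sup>T * (GV - V * D\<^sup>T * U * S))) * V\<^sup>T)) :\<^sub>F dX"
    unfolding dU_eq[OF assms(9)] D_def
    using mat_inv_top_block_carrier[OF assms(9)] mat_inv_top_block_symmetric[OF assms(9)] assms
    by (intro svd_variation_adjoint[OF _ U S V dX _ _ _ _ _ _ dS_eq dV_eq[OF assms(10)] refl])
      (auto simp: K_mat_def)
  thus ?thesis
    using dS_eq dV_eq[OF assms(10)] dU_eq[OF assms(9)] unfolding Let_def D_def by blast
qed

end
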